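(* Let $R$ be a hyperring, $\mathcal{SR}(R)$ the set of strongly regular relations on $R$ ordered by inclusion, and $\mathcal I(\gamma^*(0))$ the set of hyperideals of $R$ containing $\gamma^*(0)$ ordered by inclusion. Then the map $f:\mathcal{SR}(R)\to\mathcal I(\gamma^*(0))$, $f(\rho)=\rho(0)$, is well defined and is an isomorphism of complete lattices, with inverse $g(I)=\rho_I=\{(x,y)\in R^2: x+I=y+I\}$ (in particular $\rho_I$ is strongly regular for each $I\in\mathcal I(\gamma^*(0))$, $\rho_I(0)=I$, and $\rho_{\rho(0)}=\rho$).
   Context: Standing conventions. A hyperring means a commutative Krasner hyperring with identity: a set $R$ with a hyperoperation $+:R\times R\to\mathcal P^*(R)$ (nonempty subsets; for subsets $A,B$ one sets $A+B=\bigcup_{a\in A,b\in B}a+b$) and a binary operation $\cdot$ such that: $+$ is associative and commutative; there is $0\in R$ with $0+x=\{x\}$ for all $x$; every $x$ has a unique $-x$ with $0\in x+(-x)$; $z\in x+y$ implies $y\in -x+z$ and $x\in z-y$; $(R,\cdot)$ is a commutative monoid with identity $1$; $0\cdot x=0$; and $x(y+z)=xy+xz$. A hyperideal of $R$ is a nonempty $I\subseteq R$ with $a-b\subseteq I$ and $ra\in I$ for all $a,b\in I$, $r\in R$; $x+I=\bigcup_{y\in I}(x+y)$. An equivalence relation $\rho$ on $R$ is strongly regular if whenever $(a,b)\in\rho$ and $(c,d)\in\rho$, then $(u,v)\in\rho$ for all $u\in a+c$, $v\in b+d$, and $(ac,bd)\in\rho$; $\rho(x)$ denotes the $\rho$-class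 of $x$. Let $\mathcal U$ be the set of all finite sums of finite products of elements of $R$ (each such sum is a subset of $R$). The relation $\gamma^*$ is defined by $(a,b)\in\gamma^*$ iff there exist $a=z_1,z_2,\dots,z_{n+1}=b$ in $R$ and $U_1,\dots,U_n\in\mathcal U$ with $\{z_i,z_{i+1}\}\subseteq U_i$ for all $i$; it is the smallest strongly regular relation on $R$, and $\gamma^*(0)$ is the $\gamma^*$-class of $0$. *)

theory Defs
  imports Main
begin

definition setadd :: "('a \<Rightarrow> 'a \<Rightarrow> 'a set) \<Rightarrow> 'a set \<Rightarrow> 'a set \<Rightarrow> 'a set" where
  "setadd add A B = (\<Union>a\<in>A. \<Union>b\<in>B. add a b)"

definition hneg :: "'a set \<Rightarrow> ('a \<Rightarrow> 'a \<Rightarrow> 'a set) \<Rightarrow> 'a \<Rightarrow> 'a \<Rightarrow> 'a" where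
  "hneg R add zero x = (THE y. y \<in> R \<and> zero \<in> add x y)"

definition hyperring ::
  "'a set \<Rightarrow> ('a \<Rightarrow> 'a \<Rightarrow> 'a set) \<Rightarrow> ('a \<Rightarrow> 'a \<Rightarrow> 'a) \<Rightarrow> 'a \<Rightarrow> 'a \<Rightarrow> bool" where
  "hyperring R add mul zero one \<longleftrightarrow>
     zero \<in> R \<and> one \<in> R \<and>
     (\<forall>x\<in>R. \<forall>y\<in>R. add x y \<noteq> {} \<and> add x y \<subseteq> R) \<and>
     (\<forall>x\<in>R. \<forall>y\<in>R. mul x y \<in> R) \<and>
     (\<forall>x\<in>R. \<forall>y\<in>R. \<forall>z\<in>R. setadd add (add x y) {z} = setadd add {x} (add y z)) \<and>
     (\<forall>x\<in>R. \<forall>y\<in>R. add x y = add y x) \<and>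
     (\<forall>x\<in>R. add zero x = {x}) \<and>
     (\<forall>x\<in>R. \<exists>!y. y \<in> R \<and> zero \<in> add x y) \<and>
     (\<forall>x\<in>R. \<forall>y\<in>R. \<forall>z\<in>R. z \<in> add x y \<longrightarrow>
          y \<in> add (hneg R add zero x) z \<and> x \<in> add z (hneg R add zero y)) \<and>
     (\<forall>x\<in>R. \<forall>y\<in>R. \<forall>z\<in>R. mul (mul x y) z = mul x (mul y z)) \<and>
     (\<forall>x\<in>R. \<forall>y\<in>R. mul x y = mul y x) \<and>
     (\<forall>x\<in>R. mul one x = x) \<and>
     (\<forall>x\<in>R. mul zero x = zero) \<and>
     (\<forall>x\<in>R. \<forall>y\<in>R. \<forall>z\<in>R. mul x ` (add y z) = setadd add {mul x y} {mul x z})"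

definition hyperideal ::
  "'a set \<Rightarrow> ('a \<Rightarrow> 'a \<Rightarrow> 'a set) \<Rightarrow> ('a \<Rightarrow> 'a \<Rightarrow> 'a) \<Rightarrow> 'a \<Rightarrow> 'a set \<Rightarrow> bool" where
  "hyperideal R add mul zero I \<longleftrightarrow>
     I \<noteq> {} \<and> I \<subseteq> R \<and>
     (\<forall>a\<in>I. \<forall>b\<in>I. add a (hneg R add zero b) \<subseteq> I) \<and>
     (\<forall>r\<in>R. \<forall>a\<in>I. mul r a \<in> I)"

definition strongly_regular ::
  "'a set \<Rightarrow> ('a \<Rightarrow> 'a \<Rightarrow> 'a set) \<Rightarrow> ('a \<Rightarrow> 'a \<Rightarrow> 'a) \<Rightarrow> ('a \<times> 'a) set \<Rightarrow> bool" where
  "strongly_regular R add mul \<rho> \<longleftrightarrow>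
     equiv R \<rho> \<and>
     (\<forall>a b c d. (a, b) \<in> \<rho> \<longrightarrow> (c, d) \<in> \<rho> \<longrightarrow>
        (\<forall>u\<in>add a c. \<forall>v\<in>add b d. (u, v) \<in> \<rho>) \<and> (mul a c, mul b d) \<in> \<rho>)"

inductive_set hprods :: "'a set \<Rightarrow> ('a \<Rightarrow> 'a \<Rightarrow> 'a) \<Rightarrow> 'a set"
  for R mul where
  base: "x \<in> R \<Longrightarrow> x \<in> hprods R mul"
| step: "p \<in> hprods R mul \<Longrightarrow> x \<in> R \<Longrightarrow> mul p x \<in> hprods R mul"

inductive_set hsums :: "'a set \<Rightarrow> ('a \<Rightarrow> 'a \<Rightarrow> 'a set) \<Rightarrow> ('a \<Rightarrow> 'a \<Rightarrow> 'a) \<Rightarrow> 'a set set"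
  for R add mul where
  base: "p \<in> hprods R mul \<Longrightarrow> {p} \<in> hsums R add mul"
| step: "A \<in> hsums R add mul \<Longrightarrow> p \<in> hprods R mul \<Longrightarrow> setadd add A {p} \<in> hsums R add mul"

definition gamma_star ::
  "'a set \<Rightarrow> ('a \<Rightarrow> 'a \<Rightarrow> 'a set) \<Rightarrow> ('a \<Rightarrow> 'a \<Rightarrow> 'a) \<Rightarrow> ('a \<times> 'a) set" where
  "gamma_star R add mul = {(x, y). \<exists>U\<in>hsums R add mul. x \<in> U \<and> y \<in> U}\<^sup>+"

definition rho_of ::
  "'a set \<Rightarrow> ('a \<Rightarrow> 'a \<Rightarrow> 'a set) \<Rightarrow> 'a set \<Rightarrow> ('a \<times> 'a) set" where
  "rho_of R add I = {(x, y). x \<in> R \<and> y \<in> R \<and> setadd add {x} I = setadd add {y} I}"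

definition complete_incl_lattice :: "'b set set \<Rightarrow> bool" where
  "complete_incl_lattice S \<longleftrightarrow>
     (\<forall>A\<subseteq>S. (\<exists>s\<in>S. (\<forall>a\<in>A. a \<subseteq> s) \<and> (\<forall>t\<in>S. (\<forall>a\<in>A. a \<subseteq> t) \<longrightarrow> s \<subseteq> t)) \<and>
              (\<exists>s\<in>S. (\<forall>a\<in>A. s \<subseteq> a) \<and> (\<forall>t\<in>S. (\<forall>a\<in>A. t \<subseteq> a) \<longrightarrow> t \<subseteq> s)))"

end

theory Submission
  imports Defs
begin

(* A strongly regular relation \<rho> is determined by the class of 0: by reversibility,
   x \<rho> y holds iff y \<in> x + \<rho>(0), i.e. iff x + \<rho>(0) = y + \<rho>(0). Conversely, for a
   hyperideal I the coset relation \<rho>_I is compatible with multiplication by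
   distributivity, and with addition because any two elements u, u' of a + c are
   congruent modulo \<gamma>*(0): both u - u' and 0 lie in the sum (a + c) - u, so u - u' is in
   \<gamma>*(0) \<subseteq> I. Hence \<rho> \<mapsto> \<rho>(0) and I \<mapsto> \<rho>_I are mutually inverse monotone maps;
   both families contain a top element and are closed under nonempty intersections,
   so both are complete lattices. *)

lemma complete_incl_lattice_if_Inter_closed:
  assumes top: "T \<in> S" and le_top: "\<And>s. s \<in> S \<Longrightarrow> s \<subseteq> T"
    and Inter_closed: "\<And>A. A \<subseteq> S \<Longrightarrow> A \<noteq> {} \<Longrightarrow> \<Inter>A \<in> S"
  shows "complete_incl_lattice S"
  unfolding complete_incl_lattice_def
proof (intro allI impI conjI)
  fix A assume A: "A \<subseteq> S"
  define U where "U = {t\<in>S. \<forall>a\<in>A. a \<subseteq> t}"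
  have "T \<in> U" using top le_top A unfolding U_def by auto
  then have "\<Inter>U \<in> S" using Inter_closed[of U] unfolding U_def by blast
  moreover have "\<forall>a\<in>A. a \<subseteq> \<Inter>U" and "\<forall>t\<in>S. (\<forall>a\<in>A. a \<subseteq> t) \<longrightarrow> \<Inter>U \<subseteq> t"
    unfolding U_def by auto
  ultimately show "\<exists>s\<in>S. (\<forall>a\<in>A. a \<subseteq> s) \<and> (\<forall>t\<in>S. (\<forall>a\<in>A. a \<subseteq> t) \<longrightarrow> s \<subseteq> t)"
    by blast
  show "\<exists>s\<in>S. (\<forall>a\<in>A. s \<subseteq> a) \<and> (\<forall>t\<in>S. (\<forall>a\<in>A. t \<subseteq> a) \<longrightarrow> t \<subseteq> s)"
  proof (cases "A = {}")
    case True
    then show ?thesis using top le_top by blast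
  next
    case False
    then show ?thesis using Inter_closed[OF A] by blast
  qed
qed

lemma setadd_singleton_left: "setadd add {x} B = (\<Union>b\<in>B. add x b)"
  by (simp add: setadd_def)

lemma setadd_singleton_right: "setadd add A {y} = (\<Union>a\<in>A. add a y)"
  by (simp add: setadd_def)

lemma setadd_singletons: "setadd add {x} {y} = add x y"
  by (simp add: setadd_def)

locale krasner_hyperring =
  fixes R :: "'a set" and add :: "'a \<Rightarrow> 'a \<Rightarrow> 'a set" and mul :: "'a \<Rightarrow> 'a \<Rightarrow> 'a"
    and zero one :: 'a
  assumes zero_closed: "zero \<in> R"
    and one_closed: "one \<in> R"
    and add_nonempty: "x \<in> R \<Longrightarrow> y \<in> R \<Longrightarrow> add x y \<noteq> {}"
    and add_closed: "x \<in> R \<Longrightarrow> y \<in> R \<Longrightarrow> add x y \<subseteq> R"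
    and mul_closed: "x \<in> R \<Longrightarrow> y \<in> R \<Longrightarrow> mul x y \<in> R"
    and add_assoc: "x \<in> R \<Longrightarrow> y \<in> R \<Longrightarrow> z \<in> R \<Longrightarrow>
      setadd add (add x y) {z} = setadd add {x} (add y z)"
    and add_commute: "x \<in> R \<Longrightarrow> y \<in> R \<Longrightarrow> add x y = add y x"
    and zero_add: "x \<in> R \<Longrightarrow> add zero x = {x}"
    and ex1_neg: "x \<in> R \<Longrightarrow> \<exists>!y. y \<in> R \<and> zero \<in> add x y"
    and mem_add_reverse_left: "x \<in> R \<Longrightarrow> y \<in> R \<Longrightarrow> z \<in> R \<Longrightarrow> z \<in> add x y \<Longrightarrow>
      y \<in> add (hneg R add zero x) z"
    and mem_add_reverse_right: "x \<in> R \<Longrightarrow> y \<in> R \<Longrightarrow> z \<in> R \<Longrightarrow> z \<in> add x y \<Longrightarrow>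
      x \<in> add z (hneg R add zero y)"
    and mul_assoc: "x \<in> R \<Longrightarrow> y \<in> R \<Longrightarrow> z \<in> R \<Longrightarrow> mul (mul x y) z = mul x (mul y z)"
    and mul_commute: "x \<in> R \<Longrightarrow> y \<in> R \<Longrightarrow> mul x y = mul y x"
    and one_mul: "x \<in> R \<Longrightarrow> mul one x = x"
    and zero_mul: "x \<in> R \<Longrightarrow> mul zero x = zero"
    and mul_add_distrib: "x \<in> R \<Longrightarrow> y \<in> R \<Longrightarrow> z \<in> R \<Longrightarrow>
      mul x ` add y z = setadd add {mul x y} {mul x z}"

lemma krasner_hyperringI:
  "hyperring R add mul zero one \<Longrightarrow> krasner_hyperring R add mul zero one"
  unfolding hyperring_def by unfold_locales (elim conjE; simp)+

context krasner_hyperring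
begin

abbreviation neg :: "'a \<Rightarrow> 'a" where
  "neg x \<equiv> hneg R add zero x"

lemma add_zero: "x \<in> R \<Longrightarrow> add x zero = {x}"
  using add_commute zero_add zero_closed by metis

lemma neg_closed: "x \<in> R \<Longrightarrow> neg x \<in> R"
  and zero_mem_add_neg: "x \<in> R \<Longrightarrow> zero \<in> add x (neg x)"
  using theI'[OF ex1_neg] unfolding hneg_def by blast+

lemma neg_unique: "x \<in> R \<Longrightarrow> y \<in> R \<Longrightarrow> zero \<in> add x y \<Longrightarrow> neg x = y"
  using ex1_neg neg_closed zero_mem_add_neg by blast

lemma neg_neg: "x \<in> R \<Longrightarrow> neg (neg x) = x"
  by (metis neg_unique neg_closed zero_mem_add_neg add_commute)

lemma mul_zero: "x \<in> R \<Longrightarrow> mul x zero = zero"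
  using mul_commute zero_mul zero_closed by metis

lemma mul_mem_add_distrib:
  "w \<in> R \<Longrightarrow> x \<in> R \<Longrightarrow> a \<in> R \<Longrightarrow> y \<in> add x a \<Longrightarrow> mul w y \<in> add (mul w x) (mul w a)"
  using mul_add_distrib by (force simp: setadd_singletons)

lemma mem_add_exchange:
  assumes R: "x \<in> R" "a \<in> R" "w \<in> R" and y: "y \<in> add x a" and v: "v \<in> add y w"
  shows "\<exists>u\<in>add x w. v \<in> add u a"
proof -
  have "v \<in> setadd add (add x a) {w}" using y v by (auto simp: setadd_singleton_right)
  also have "\<dots> = setadd add {x} (add w a)" using add_assoc add_commute R by metis
  also have "\<dots> = setadd add (add x w) {a}" using add_assoc R by metis
  finally show ?thesis by (auto simp: setadd_singleton_right)
qed

context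
  fixes I
  assumes I: "hyperideal R add mul zero I"
begin

lemma hyperideal_subset: "I \<subseteq> R"
  using I unfolding hyperideal_def by blast

lemma hyperideal_diff_subset: "a \<in> I \<Longrightarrow> b \<in> I \<Longrightarrow> add a (neg b) \<subseteq> I"
  using I unfolding hyperideal_def by blast

lemma hyperideal_mul_mem: "r \<in> R \<Longrightarrow> a \<in> I \<Longrightarrow> mul r a \<in> I"
  using I unfolding hyperideal_def by blast

lemma hyperideal_zero_mem: "zero \<in> I"
proof -
  obtain a where "a \<in> I" using I unfolding hyperideal_def by blast
  then show ?thesis
    using hyperideal_diff_subset[of a a] zero_mem_add_neg hyperideal_subset by blast
qed

lemma hyperideal_neg_mem: "a \<in> I \<Longrightarrow> neg a \<in> I"
  using hyperideal_diff_subset[OF hyperideal_zero_mem, of a] zero_add neg_closed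
    hyperideal_subset by blast

lemma hyperideal_add_subset: "a \<in> I \<Longrightarrow> b \<in> I \<Longrightarrow> add a b \<subseteq> I"
  using hyperideal_diff_subset[of a "neg b"] hyperideal_neg_mem neg_neg hyperideal_subset
  by (metis subsetD)

lemma coset_subset_if_mem_add:
  assumes u: "u \<in> R" and b: "b \<in> I" and v: "v \<in> add u b"
  shows "setadd add {v} I \<subseteq> setadd add {u} I"
proof
  fix z assume "z \<in> setadd add {v} I"
  then obtain c where c: "c \<in> I" "z \<in> add v c" by (auto simp: setadd_singleton_left)
  have "z \<in> setadd add (add u b) {c}" using v c by (auto simp: setadd_singleton_right)
  also have "\<dots> = setadd add {u} (add b c)"
    using add_assoc u b c hyperideal_subset by blast
  finally obtain t where "t \<in> add b c" "z \<in> add u t" by (auto simp: setadd_singleton_left)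
  with hyperideal_add_subset[OF b c(1)] show "z \<in> setadd add {u} I"
    by (auto simp: setadd_singleton_left)
qed

lemma coset_eq_if_mem_add:
  assumes u: "u \<in> R" and b: "b \<in> I" and v: "v \<in> add u b"
  shows "setadd add {v} I = setadd add {u} I"
proof
  have bR: "b \<in> R" and vR: "v \<in> R" using b u v hyperideal_subset add_closed by blast+
  have "u \<in> add v (neg b)" using mem_add_reverse_right u bR vR v by blast
  then show "setadd add {u} I \<subseteq> setadd add {v} I"
    using coset_subset_if_mem_add vR hyperideal_neg_mem b by blast
qed (fact coset_subset_if_mem_add[OF assms])

lemma coset_eq_iff_mem:
  assumes "x \<in> R" "y \<in> R"
  shows "setadd add {x} I = setadd add {y} I \<longleftrightarrow> y \<in> setadd add {x} I"
proof
  have "y \<in> add y zero" using add_zero assms(2) by simp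
  then have "y \<in> setadd add {y} I" using hyperideal_zero_mem by (auto simp: setadd_singleton_left)
  moreover assume "setadd add {x} I = setadd add {y} I"
  ultimately show "y \<in> setadd add {x} I" by simp
next
  assume "y \<in> setadd add {x} I"
  then obtain b where "b \<in> I" "y \<in> add x b" by (auto simp: setadd_singleton_left)
  then show "setadd add {x} I = setadd add {y} I" using coset_eq_if_mem_add assms by metis
qed

lemma rho_of_iff:
  "(x, y) \<in> rho_of R add I \<longleftrightarrow> x \<in> R \<and> y \<in> R \<and> y \<in> setadd add {x} I"
  unfolding rho_of_def using coset_eq_iff_mem by blast

lemma Image_zero_rho_of: "rho_of R add I `` {zero} = I"
proof -
  have "setadd add {zero} I = I"
    using hyperideal_subset zero_add by (auto simp: setadd_singleton_left)
  then show ?thesis using rho_of_iff zero_closed hyperideal_subset by auto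
qed

lemma equiv_rho_of: "equiv R (rho_of R add I)"
  unfolding equiv_def refl_on_def sym_def trans_def rho_of_def by auto

lemma coset_eq_if_mem_same_add:
  assumes gamma: "gamma_star R add mul `` {zero} \<subseteq> I"
    and a: "a \<in> R" and c: "c \<in> R" and u: "u \<in> add a c" and u': "u' \<in> add a c"
  shows "setadd add {u'} I = setadd add {u} I"
proof -
  have uR: "u \<in> R" and u'R: "u' \<in> R" using add_closed a c u u' by blast+
  obtain t where t: "t \<in> add u' (neg u)" using add_nonempty u'R neg_closed uR by blast
  have tR: "t \<in> R" using t add_closed u'R neg_closed uR by blast
  let ?U = "setadd add (add a c) {neg u}"
  have "setadd add {a} {c} \<in> hsums R add mul"
    by (rule hsums.step[OF hsums.base[OF hprods.base[OF a]] hprods.base[OF c]])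
  then have "?U \<in> hsums R add mul"
    by (metis hsums.step hprods.base neg_closed uR setadd_singletons)
  moreover have "zero \<in> ?U" and "t \<in> ?U"
    using u u' t zero_mem_add_neg uR by (auto simp: setadd_singleton_right)
  ultimately have "(zero, t) \<in> gamma_star R add mul" unfolding gamma_star_def by blast
  then have tI: "t \<in> I" using gamma by blast
  have "u' \<in> add t (neg (neg u))" using mem_add_reverse_right[OF u'R neg_closed[OF uR] tR t] .
  then have "u' \<in> add u t" using neg_neg uR add_commute tR by metis
  then show ?thesis using coset_eq_if_mem_add uR tI by blast
qed

lemma rho_of_add:
  assumes gamma: "gamma_star R add mul `` {zero} \<subseteq> I"
    and ab: "(a, b) \<in> rho_of R add I" and cd: "(c, d) \<in> rho_of R add I"
    and u: "u \<in> add a c" and v: "v \<in> add b d"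
  shows "(u, v) \<in> rho_of R add I"
proof -
  have R: "a \<in> R" "b \<in> R" "c \<in> R" "d \<in> R" using ab cd by (auto simp: rho_of_iff)
  obtain \<beta> where \<beta>: "\<beta> \<in> I" "b \<in> add a \<beta>"
    using ab by (auto simp: rho_of_iff setadd_singleton_left)
  obtain \<delta> where \<delta>: "\<delta> \<in> I" "d \<in> add c \<delta>"
    using cd by (auto simp: rho_of_iff setadd_singleton_left)
  have \<beta>R: "\<beta> \<in> R" and \<delta>R: "\<delta> \<in> R" using \<beta> \<delta> hyperideal_subset by blast+
  \<comment> \<open>Move \<beta> and \<delta> out of v \<in> (a + \<beta>) + (c + \<delta>) to reach some w \<in> a + c.\<close>
  obtain v' where v': "v' \<in> add a d" "v \<in> add v' \<beta>"
    using mem_add_exchange[OF R(1) \<beta>R R(4) \<beta>(2) v] by blast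
  have "v' \<in> add d a" using v'(1) add_commute[OF R(1) R(4)] by simp
  then obtain w where w: "w \<in> add c a" "v' \<in> add w \<delta>"
    using mem_add_exchange[OF R(3) \<delta>R R(1) \<delta>(2)] by blast
  have v'R: "v' \<in> R" and wR: "w \<in> R" using v'(1) w(1) add_closed R by blast+
  have "setadd add {v} I = setadd add {v'} I"
    using coset_eq_if_mem_add[OF v'R \<beta>(1) v'(2)] .
  also have "\<dots> = setadd add {w} I"
    using coset_eq_if_mem_add[OF wR \<delta>(1) w(2)] .
  also have "\<dots> = setadd add {u} I"
    using coset_eq_if_mem_same_add[OF gamma R(1) R(3) u] w(1) add_commute[OF R(1) R(3)]
    by simp
  finally show ?thesis
    using add_closed[OF R(1) R(3)] add_closed[OF R(2) R(4)] u v unfolding rho_of_def by auto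
qed

lemma rho_of_mul:
  assumes ab: "(a, b) \<in> rho_of R add I" and cd: "(c, d) \<in> rho_of R add I"
  shows "(mul a c, mul b d) \<in> rho_of R add I"
proof -
  have R: "a \<in> R" "b \<in> R" "c \<in> R" "d \<in> R" using ab cd by (auto simp: rho_of_iff)
  obtain \<beta> where \<beta>: "\<beta> \<in> I" "b \<in> add a \<beta>"
    using ab by (auto simp: rho_of_iff setadd_singleton_left)
  obtain \<delta> where \<delta>: "\<delta> \<in> I" "d \<in> add c \<delta>"
    using cd by (auto simp: rho_of_iff setadd_singleton_left)
  have \<beta>R: "\<beta> \<in> R" and \<delta>R: "\<delta> \<in> R" using \<beta> \<delta> hyperideal_subset by blast+
  have "setadd add {mul d b} I = setadd add {mul d a} I"
    using coset_eq_if_mem_add[OF mul_closed[OF R(4) R(1)] hyperideal_mul_mem[OF R(4) \<beta>(1)]]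
      mul_mem_add_distrib[OF R(4) R(1) \<beta>R \<beta>(2)] .
  moreover have "setadd add {mul a d} I = setadd add {mul a c} I"
    using coset_eq_if_mem_add[OF mul_closed[OF R(1) R(3)] hyperideal_mul_mem[OF R(1) \<delta>(1)]]
      mul_mem_add_distrib[OF R(1) R(3) \<delta>R \<delta>(2)] .
  ultimately show ?thesis
    unfolding rho_of_def using mul_closed[OF R(1) R(3)] mul_closed[OF R(2) R(4)]
      mul_commute[OF R(2) R(4)] mul_commute[OF R(1) R(4)] by auto
qed

lemma strongly_regular_rho_of:
  "gamma_star R add mul `` {zero} \<subseteq> I \<Longrightarrow> strongly_regular R add mul (rho_of R add I)"
  unfolding strongly_regular_def using equiv_rho_of rho_of_add rho_of_mul by blast

end

lemma rho_of_mono: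
  assumes "hyperideal R add mul zero I" "hyperideal R add mul zero J" "I \<subseteq> J"
  shows "rho_of R add I \<subseteq> rho_of R add J"
  using assms rho_of_iff by (fastforce simp: setadd_singleton_left)

lemma hprods_closed: "p \<in> hprods R mul \<Longrightarrow> p \<in> R"
  by (induction rule: hprods.induct) (auto simp: mul_closed)

context
  fixes \<rho>
  assumes sr: "strongly_regular R add mul \<rho>"
begin

lemma strongly_regular_in_carrier: "(a, b) \<in> \<rho> \<Longrightarrow> a \<in> R \<and> b \<in> R"
  using sr unfolding strongly_regular_def equiv_def refl_on_def by blast

lemma strongly_regular_refl: "a \<in> R \<Longrightarrow> (a, a) \<in> \<rho>"
  using sr unfolding strongly_regular_def equiv_def refl_on_def by blast

lemma strongly_regular_sym: "(a, b) \<in> \<rho> \<Longrightarrow> (b, a) \<in> \<rho>"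
  using sr unfolding strongly_regular_def equiv_def sym_def by blast

lemma strongly_regular_trans: "(a, b) \<in> \<rho> \<Longrightarrow> (b, c) \<in> \<rho> \<Longrightarrow> (a, c) \<in> \<rho>"
  using sr unfolding strongly_regular_def equiv_def trans_def by blast

lemma strongly_regular_add:
  "(a, b) \<in> \<rho> \<Longrightarrow> (c, d) \<in> \<rho> \<Longrightarrow> u \<in> add a c \<Longrightarrow> v \<in> add b d \<Longrightarrow> (u, v) \<in> \<rho>"
  using sr unfolding strongly_regular_def by blast

lemma strongly_regular_mul: "(a, b) \<in> \<rho> \<Longrightarrow> (c, d) \<in> \<rho> \<Longrightarrow> (mul a c, mul b d) \<in> \<rho>"
  using sr unfolding strongly_regular_def by blast

lemma hsums_related: "U \<in> hsums R add mul \<Longrightarrow> x \<in> U \<Longrightarrow> y \<in> U \<Longrightarrow> (x, y) \<in> \<rho>"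
proof (induction arbitrary: x y rule: hsums.induct)
  case (base p)
  then show ?case using hprods_closed strongly_regular_refl by simp
next
  case (step A p)
  then obtain a b where "a \<in> A" "x \<in> add a p" "b \<in> A" "y \<in> add b p"
    by (auto simp: setadd_singleton_right)
  then show ?case
    using step.IH hprods_closed[OF step.hyps(2)] strongly_regular_refl strongly_regular_add
    by blast
qed

lemma gamma_star_subset: "gamma_star R add mul \<subseteq> \<rho>"
proof -
  have "{(x, y). \<exists>U\<in>hsums R add mul. x \<in> U \<and> y \<in> U} \<subseteq> \<rho>"
    using hsums_related by blast
  then have "gamma_star R add mul \<subseteq> \<rho>\<^sup>+"
    unfolding gamma_star_def by (rule trancl_mono_subset)
  also have "\<rho>\<^sup>+ = \<rho>"
    using sr unfolding strongly_regular_def equiv_def by (simp add: trancl_id)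
  finally show ?thesis .
qed

lemma hyperideal_Image_zero: "hyperideal R add mul zero (\<rho> `` {zero})"
  unfolding hyperideal_def
proof (intro conjI ballI subsetI)
  show "\<rho> `` {zero} \<noteq> {}" using strongly_regular_refl zero_closed by blast
  show "x \<in> R" if "x \<in> \<rho> `` {zero}" for x using that strongly_regular_in_carrier by blast
next
  fix a b u assume "a \<in> \<rho> `` {zero}" "b \<in> \<rho> `` {zero}" and u: "u \<in> add a (neg b)"
  then have za: "(a, zero) \<in> \<rho>" and zb: "(b, zero) \<in> \<rho>" using strongly_regular_sym by auto
  have bR: "b \<in> R" using zb strongly_regular_in_carrier by blast
  have nb: "(neg b, neg b) \<in> \<rho>" using strongly_regular_refl neg_closed bR by blast
  have "(u, neg b) \<in> \<rho>"
    using strongly_regular_add[OF za nb u] zero_add neg_closed bR by blast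
  moreover have "(zero, neg b) \<in> \<rho>"
    using strongly_regular_add[OF zb nb] zero_mem_add_neg bR zero_add neg_closed by blast
  ultimately show "u \<in> \<rho> `` {zero}" using strongly_regular_trans strongly_regular_sym by blast
next
  fix r a assume r: "r \<in> R" and "a \<in> \<rho> `` {zero}"
  then have "(mul r zero, mul r a) \<in> \<rho>"
    using strongly_regular_mul[OF strongly_regular_refl[OF r]] by blast
  then show "mul r a \<in> \<rho> `` {zero}" using mul_zero r by simp
qed

lemma rho_of_Image_zero: "rho_of R add (\<rho> `` {zero}) = \<rho>"
proof (intro set_eqI iffI; clarify)
  fix x y assume "(x, y) \<in> rho_of R add (\<rho> `` {zero})"
  then have x: "x \<in> R" and "y \<in> setadd add {x} (\<rho> `` {zero})"
    using rho_of_iff[OF hyperideal_Image_zero] by auto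
  then obtain b where b: "(zero, b) \<in> \<rho>" "y \<in> add x b" by (auto simp: setadd_singleton_left)
  then show "(x, y) \<in> \<rho>" using strongly_regular_add[OF strongly_regular_refl[OF x] b(1)] add_zero x
    by blast
next
  fix x y assume xy: "(x, y) \<in> \<rho>"
  then have x: "x \<in> R" and y: "y \<in> R" using strongly_regular_in_carrier by auto
  \<comment> \<open>Reversibility writes y = x + b with b \<in> -x + y, and -x + y is \<rho>-related to -x + x \<ni> 0.\<close>
  obtain b where b: "b \<in> add (neg x) y" using add_nonempty neg_closed x y by blast
  then have "y \<in> add x b"
    using mem_add_reverse_left[OF neg_closed[OF x] y _ b] add_closed neg_closed neg_neg x y
    by force
  moreover have "(zero, b) \<in> \<rho>"
    using strongly_regular_add[OF strongly_regular_refl[OF neg_closed[OF x]] xy _ b]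
      zero_mem_add_neg add_commute neg_closed x by metis
  ultimately have "y \<in> setadd add {x} (\<rho> `` {zero})" by (auto simp: setadd_singleton_left)
  then show "(x, y) \<in> rho_of R add (\<rho> `` {zero})"
    using rho_of_iff[OF hyperideal_Image_zero] x y by auto
qed

end

lemma strongly_regular_subset_iff:
  assumes "strongly_regular R add mul \<rho>" "strongly_regular R add mul \<sigma>"
  shows "\<rho> \<subseteq> \<sigma> \<longleftrightarrow> \<rho> `` {zero} \<subseteq> \<sigma> `` {zero}"
proof
  assume "\<rho> `` {zero} \<subseteq> \<sigma> `` {zero}"
  then have "rho_of R add (\<rho> `` {zero}) \<subseteq> rho_of R add (\<sigma> `` {zero})"
    using rho_of_mono hyperideal_Image_zero assms by blast
  then show "\<rho> \<subseteq> \<sigma>" using rho_of_Image_zero assms by simp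
qed blast

lemma strongly_regular_full: "strongly_regular R add mul (R \<times> R)"
  unfolding strongly_regular_def
  by (auto simp: equiv_def refl_on_def sym_def trans_def dest: add_closed intro: mul_closed)

lemma strongly_regular_Inter:
  assumes "A \<noteq> {}" and sr: "\<And>\<rho>. \<rho> \<in> A \<Longrightarrow> strongly_regular R add mul \<rho>"
  shows "strongly_regular R add mul (\<Inter>A)"
  unfolding strongly_regular_def
proof (intro conjI allI impI ballI equivI)
  obtain \<rho> where "\<rho> \<in> A" using assms(1) by blast
  then show "\<Inter>A \<subseteq> R \<times> R" using strongly_regular_in_carrier[OF sr] by (clarify; blast)
  show "refl_on R (\<Inter>A)" using strongly_regular_refl[OF sr] by (auto simp: refl_on_def)
  show "sym (\<Inter>A)" using strongly_regular_sym[OF sr] by (auto simp: sym_def)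
  show "trans (\<Inter>A)" using strongly_regular_trans[OF sr] by (auto simp: trans_def)
  show "(u, v) \<in> \<Inter>A"
    if "(a, b) \<in> \<Inter>A" "(c, d) \<in> \<Inter>A" "u \<in> add a c" "v \<in> add b d" for a b c d u v
    using that strongly_regular_add[OF sr] by blast
  show "(mul a c, mul b d) \<in> \<Inter>A" if "(a, b) \<in> \<Inter>A" "(c, d) \<in> \<Inter>A" for a b c d
    using that strongly_regular_mul[OF sr] by blast
qed

lemma hyperideal_Inter:
  assumes "A \<noteq> {}" and hi: "\<And>I. I \<in> A \<Longrightarrow> hyperideal R add mul zero I"
  shows "hyperideal R add mul zero (\<Inter>A)"
  unfolding hyperideal_def
proof (intro conjI ballI subsetI)
  show "\<Inter>A \<noteq> {}" using hyperideal_zero_mem[OF hi] by blast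
  obtain I where "I \<in> A" using assms(1) by blast
  then show "x \<in> R" if "x \<in> \<Inter>A" for x using that hyperideal_subset[OF hi] by blast
  show "u \<in> \<Inter>A" if "a \<in> \<Inter>A" "b \<in> \<Inter>A" "u \<in> add a (neg b)" for a b u
    using that hyperideal_diff_subset[OF hi] by blast
  show "mul r a \<in> \<Inter>A" if "r \<in> R" "a \<in> \<Inter>A" for r a
    using that hyperideal_mul_mem[OF hi] by blast
qed


lemma hyperideal_carrier: "hyperideal R add mul zero R"
  unfolding hyperideal_def using zero_closed add_closed neg_closed mul_closed by blast

lemma complete_incl_lattice_strongly_regular:
  "complete_incl_lattice {\<rho>. strongly_regular R add mul \<rho>}"
proof (rule complete_incl_lattice_if_Inter_closed)
  show "R \<times> R \<in> {\<rho>. strongly_regular R add mul \<rho>}" using strongly_regular_full by blast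
  show "\<rho> \<subseteq> R \<times> R" if "\<rho> \<in> {\<rho>. strongly_regular R add mul \<rho>}" for \<rho>
    using that strongly_regular_in_carrier by (clarify; blast)
  show "\<Inter>A \<in> {\<rho>. strongly_regular R add mul \<rho>}"
    if "A \<subseteq> {\<rho>. strongly_regular R add mul \<rho>}" "A \<noteq> {}" for A
    using that strongly_regular_Inter by blast
qed

lemma complete_incl_lattice_hyperideals_containing:
  assumes "J \<subseteq> R"
  shows "complete_incl_lattice {I. hyperideal R add mul zero I \<and> J \<subseteq> I}"
proof (rule complete_incl_lattice_if_Inter_closed)
  show "R \<in> {I. hyperideal R add mul zero I \<and> J \<subseteq> I}" using hyperideal_carrier assms by blast
  show "I \<subseteq> R" if "I \<in> {I. hyperideal R add mul zero I \<and> J \<subseteq> I}" for I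
    using that hyperideal_subset by blast
  show "\<Inter>A \<in> {I. hyperideal R add mul zero I \<and> J \<subseteq> I}"
    if "A \<subseteq> {I. hyperideal R add mul zero I \<and> J \<subseteq> I}" "A \<noteq> {}" for A
    using that hyperideal_Inter by blast
qed

end

theorem mainTheorem17:
  fixes R :: "'a set" and add :: "'a \<Rightarrow> 'a \<Rightarrow> 'a set" and mul :: "'a \<Rightarrow> 'a \<Rightarrow> 'a"
    and zero one :: 'a
  assumes hr: "hyperring R add mul zero one"
  defines "SR \<equiv> {\<rho>. strongly_regular R add mul \<rho>}"
      and "II \<equiv> {I. hyperideal R add mul zero I \<and> gamma_star R add mul `` {zero} \<subseteq> I}"
      and "f \<equiv> (\<lambda>\<rho>. \<rho> `` {zero})"
      and "g \<equiv> (\<lambda>I. rho_of R add I)"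
  shows "(\<forall>\<rho>\<in>SR. f \<rho> \<in> II) \<and>
         (\<forall>I\<in>II. g I \<in> SR \<and> f (g I) = I) \<and>
         (\<forall>\<rho>\<in>SR. g (f \<rho>) = \<rho>) \<and>
         bij_betw f SR II \<and>
         (\<forall>\<rho>\<in>SR. \<forall>\<sigma>\<in>SR. \<rho> \<subseteq> \<sigma> \<longleftrightarrow> f \<rho> \<subseteq> f \<sigma>) \<and>
         complete_incl_lattice SR \<and> complete_incl_lattice II"
proof -
  interpret krasner_hyperring R add mul zero one by (rule krasner_hyperringI[OF hr])
  have f_II: "\<forall>\<rho>\<in>SR. f \<rho> \<in> II"
    using hyperideal_Image_zero gamma_star_subset unfolding SR_def II_def f_def by blast
  have g_SR: "\<forall>I\<in>II. g I \<in> SR \<and> f (g I) = I"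
    using strongly_regular_rho_of Image_zero_rho_of unfolding SR_def II_def f_def g_def by blast
  have gf: "\<forall>\<rho>\<in>SR. g (f \<rho>) = \<rho>"
    using rho_of_Image_zero unfolding SR_def f_def g_def by blast
  have "\<forall>\<rho>\<in>SR. \<forall>\<sigma>\<in>SR. \<rho> \<subseteq> \<sigma> \<longleftrightarrow> f \<rho> \<subseteq> f \<sigma>"
    using strongly_regular_subset_iff unfolding SR_def f_def by blast
  moreover have "bij_betw f SR II"
    by (rule bij_betw_byWitness[where f'=g]) (use f_II g_SR gf in auto)
  moreover have "complete_incl_lattice SR"
    unfolding SR_def by (rule complete_incl_lattice_strongly_regular)
  moreover have "complete_incl_lattice II"
    using complete_incl_lattice_hyperideals_containing gamma_star_subset[OF strongly_regular_full]
    unfolding II_def by blast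
  ultimately show ?thesis using f_II g_SR gf by blast
qed

end
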